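(* For all integers $k\geq 1$, $i\geq k+3$ and $j\geq k+2$, we have $$R_k^{\mathcal{FO}}(i,j)=j+\Big\lfloor\frac{j-1}{k+1}\Big\rfloor,$$ where $\mathcal{FO}$ is the class of all forests.
   Context: All graphs are finite and simple. For a graph $G$ and a nonnegative integer $k$, a $k$-sparse $j$-set is a set of $j$ vertices of $G$ inducing a subgraph of maximum degree at most $k$; a $k$-dense $i$-set is a set of $i$ vertices of $G$ that is $k$-sparse in the complement of $G$ (i.e., each vertex of the set is non-adjacent to at most $k$ other vertices of the set). For a graph class $\mathcal{G}$, the $k$-defective Ramsey number $R_k^{\mathcal{G}}(i,j)$ is the smallest natural number $n$ such that every graph on $n$ vertices in $\mathcal{G}$ has either a $k$-dense $i$-set or a $k$-sparse $j$-set. A forest is a graph with no cycles. *)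

theory Defs
  imports Main
begin

definition simple_graph :: "nat \<Rightarrow> (nat \<Rightarrow> nat \<Rightarrow> bool) \<Rightarrow> bool" where
  "simple_graph n E \<longleftrightarrow>
     (\<forall>u v. E u v \<longrightarrow> E v u) \<and> (\<forall>v. \<not> E v v) \<and>
     (\<forall>u v. E u v \<longrightarrow> u < n \<and> v < n)"

definition is_cycle :: "(nat \<Rightarrow> nat \<Rightarrow> bool) \<Rightarrow> nat list \<Rightarrow> bool" where
  "is_cycle E cs \<longleftrightarrow> length cs \<ge> 3 \<and> distinct cs \<and>
     (\<forall>t. Suc t < length cs \<longrightarrow> E (cs ! t) (cs ! Suc t)) \<and>
     E (last cs) (hd cs)"

definition forest :: "nat \<Rightarrow> (nat \<Rightarrow> nat \<Rightarrow> bool) \<Rightarrow> bool" where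
  "forest n E \<longleftrightarrow> simple_graph n E \<and> (\<nexists>cs. is_cycle E cs)"

definition sparse_set :: "nat \<Rightarrow> (nat \<Rightarrow> nat \<Rightarrow> bool) \<Rightarrow> nat \<Rightarrow> nat \<Rightarrow> nat set \<Rightarrow> bool" where
  "sparse_set n E k j S \<longleftrightarrow> S \<subseteq> {0..<n} \<and> card S = j \<and>
     (\<forall>v\<in>S. card {u\<in>S. E v u} \<le> k)"

definition dense_set :: "nat \<Rightarrow> (nat \<Rightarrow> nat \<Rightarrow> bool) \<Rightarrow> nat \<Rightarrow> nat \<Rightarrow> nat set \<Rightarrow> bool" where
  "dense_set n E k i S \<longleftrightarrow> S \<subseteq> {0..<n} \<and> card S = i \<and>
     (\<forall>v\<in>S. card {u\<in>S. u \<noteq> v \<and> \<not> E v u} \<le> k)"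

definition forest_defective_ramsey :: "nat \<Rightarrow> nat \<Rightarrow> nat \<Rightarrow> nat" where
  "forest_defective_ramsey k i j =
     (LEAST n. \<forall>E. forest n E \<longrightarrow>
        (\<exists>S. dense_set n E k i S) \<or> (\<exists>S. sparse_set n E k j S))"

end

(*
  For k \<ge> 1, every finite vertex set S of a forest contains a set D of at most
  |S| div (k + 2) vertices whose deletion leaves maximum degree at most k.  By induction on |S|:
  if some vertex and all its neighbours have degree at most k, that vertex can be set aside
  without any deletion.  Otherwise take a longest path v0 v1 v2 ...: v0 is a leaf, so v1 has degree > k, and every
  neighbour of v1 other than v2 is a leaf.  Hence one vertex (v1, or v2 if v1 has at most k leaves)
  cuts off a set X of at least k + 2 vertices in which the rest of X has maximum degree at most k:
  one deletion per k + 2 vertices.  On n = j + (j - 1) div (k + 1) vertices at least j survive.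

  Lower bound.  On fewer vertices, (j - 1) div (k + 1) disjoint stars K_{1,k+1} plus isolated
  vertices form a forest without a k-sparse j-set, as such a set misses a vertex of every star.

  Dense sets never occur: every nonempty vertex set of a forest has a vertex with at most one
  neighbour in it, hence with at least i - 2 > k non-neighbours.
*)
theory Submission
  imports Defs
begin

abbreviation max_degree_le :: "(nat \<Rightarrow> nat \<Rightarrow> bool) \<Rightarrow> nat set \<Rightarrow> nat \<Rightarrow> bool" where
  "max_degree_le E S k \<equiv> \<forall>v\<in>S. card {u\<in>S. E v u} \<le> k"

lemma max_degree_le_subset:
  assumes "finite S" "T \<subseteq> S" "max_degree_le E S k"
  shows "max_degree_le E T k"
proof
  fix v assume "v \<in> T"
  have "card {u\<in>T. E v u} \<le> card {u\<in>S. E v u}"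
    using assms(1,2) by (intro card_mono) auto
  then show "card {u\<in>T. E v u} \<le> k" using assms(2,3) \<open>v \<in> T\<close> by force
qed

definition path_in :: "(nat \<Rightarrow> nat \<Rightarrow> bool) \<Rightarrow> nat set \<Rightarrow> nat list \<Rightarrow> bool" where
  "path_in E S P \<longleftrightarrow> P \<noteq> [] \<and> distinct P \<and> set P \<subseteq> S \<and>
     (\<forall>t. Suc t < length P \<longrightarrow> E (P ! t) (P ! Suc t))"

definition longest_path_in :: "(nat \<Rightarrow> nat \<Rightarrow> bool) \<Rightarrow> nat set \<Rightarrow> nat list \<Rightarrow> bool" where
  "longest_path_in E S P \<longleftrightarrow> path_in E S P \<and> (\<forall>Q. path_in E S Q \<longrightarrow> length Q \<le> length P)"

lemma longest_path_in_exists: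
  assumes "finite S" "S \<noteq> {}"
  shows "\<exists>P. longest_path_in E S P"
proof -
  obtain x where "x \<in> S" using assms(2) by blast
  then have "path_in E S [x]" by (simp add: path_in_def)
  moreover have "length Q < Suc (card S)" if "path_in E S Q" for Q
  proof -
    have "distinct Q" "set Q \<subseteq> S" using that by (auto simp: path_in_def)
    then have "length Q \<le> card S" using assms(1) by (metis card_mono distinct_card)
    then show ?thesis by simp
  qed
  ultimately show ?thesis
    unfolding longest_path_in_def
    using ex_has_greatest_nat[of "path_in E S" "[x]" length "Suc (card S)"] by blast
qed

lemma path_chord_cycle:
  assumes P: "path_in E S P" and st: "s + 2 \<le> t" "t < length P" and chord: "E (P ! t) (P ! s)"
  shows "is_cycle E (drop s (take (Suc t) P))"
proof -
  let ?C = "drop s (take (Suc t) P)"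
  have len: "length ?C = Suc t - s" using st by simp
  have nth: "?C ! r = P ! (s + r)" if "r < length ?C" for r
    using that st by simp
  have "last ?C = P ! t" using st len nth by (simp add: last_conv_nth)
  moreover have "hd ?C = P ! s" using st len nth by (simp add: hd_conv_nth)
  ultimately show ?thesis
    using P st chord len nth unfolding is_cycle_def path_in_def by auto
qed

definition detachable :: "(nat \<Rightarrow> nat \<Rightarrow> bool) \<Rightarrow> nat \<Rightarrow> nat set \<Rightarrow> nat set \<Rightarrow> nat \<Rightarrow> bool" where
  "detachable E k S X d \<longleftrightarrow> X \<subseteq> S \<and> d \<in> X \<and> k + 2 \<le> card X \<and>
     (\<forall>x\<in>X - {d}. \<forall>y\<in>S. E x y \<longrightarrow> y \<in> X) \<and> max_degree_le E (X - {d}) k"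

lemma hub_detachable:
  assumes fin: "finite S" and k: "1 \<le> k"
    and v: "v \<in> S" "\<not> E v v" "k < card {u\<in>S. E v u}"
    and pendant: "\<And>u. u \<in> S \<Longrightarrow> E v u \<Longrightarrow> u \<noteq> w \<Longrightarrow> \<forall>z\<in>S. E u z \<longrightarrow> z = v"
  shows "\<exists>X d. detachable E k S X d"
proof -
  define N where "N = {u\<in>S. E v u}"
  define L where "L = {u\<in>N. \<forall>z\<in>S. E u z \<longrightarrow> z = v}"
  have LS: "L \<subseteq> S" and finL: "finite L" and vL: "v \<notin> L"
    using fin v(2) finite_subset[of L S] by (auto simp: L_def N_def)
  have leaf: "y = v" if "x \<in> L" "y \<in> S" "E x y" for x y
    using that by (auto simp: L_def)
  have leaf_degree: "card {u\<in>X. E x u} \<le> k" if "x \<in> L" "X \<subseteq> S" for x X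
  proof -
    have "card {u\<in>X. E x u} \<le> card {v}"
      using that by (intro card_mono) (auto simp: L_def)
    then show ?thesis using k by simp
  qed
  show ?thesis
  proof (cases "k + 1 \<le> card L")
    case True
    have "detachable E k S (insert v L) v"
      unfolding detachable_def
      using True LS v(1) vL finL leaf leaf_degree by auto
    then show ?thesis by blast
  next
    case False
    have "N \<subseteq> insert w L" using pendant by (auto simp: N_def L_def)
    have cardN: "k + 1 \<le> card N" using v(3) by (simp add: N_def)
    have "\<not> N \<subseteq> L"
      using card_mono[OF finL, of N] cardN False by linarith
    then have w: "w \<in> N" "w \<notin> L" using \<open>N \<subseteq> insert w L\<close> by auto
    have "card N \<le> card (insert w L)" using finL \<open>N \<subseteq> insert w L\<close> by (intro card_mono) auto
    then have cardL: "k \<le> card L" using cardN finL w(2) by simp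
    have wv: "w \<noteq> v" using w v(2) by (auto simp: N_def)
    have hub_degree: "card {u\<in>insert v L. E v u} \<le> k"
    proof -
      have "card {u\<in>insert v L. E v u} \<le> card L"
        using finL v(2) by (intro card_mono) auto
      then show ?thesis using False by simp
    qed
    have "max_degree_le E (insert v L) k"
      using hub_degree leaf_degree[of _ "insert v L"] LS v(1) by blast
    moreover have "insert w (insert v L) - {w} = insert v L" using vL w wv by auto
    ultimately have "detachable E k S (insert w (insert v L)) w"
      unfolding detachable_def
      using cardL LS v(1) vL w wv finL leaf \<open>N \<subseteq> insert w L\<close> by (auto simp: N_def)
    then show ?thesis by blast
  qed
qed

locale acyclic_graph =
  fixes E :: "nat \<Rightarrow> nat \<Rightarrow> bool"
  assumes sym: "E u v \<Longrightarrow> E v u"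
    and irrefl: "\<not> E v v"
    and no_cycle: "\<not> is_cycle E cs"

lemma forest_acyclic_graph: "forest n E \<Longrightarrow> acyclic_graph E"
  unfolding forest_def simple_graph_def acyclic_graph_def by blast

context acyclic_graph
begin

lemma longest_path_hd_nbr:
  assumes P: "longest_path_in E S P" and y: "y \<in> S" "E (hd P) y"
  shows "Suc 0 < length P \<and> y = P ! 1"
proof -
  have path: "path_in E S P" and ne: "P \<noteq> []" using P by (auto simp: longest_path_in_def path_in_def)
  have hd: "hd P = P ! 0" using ne by (simp add: hd_conv_nth)
  have "y \<in> set P"
  proof (rule ccontr)
    assume "y \<notin> set P"
    moreover have "E y (P ! 0)" using sym y(2) hd by simp
    ultimately have "path_in E S (y # P)"
      using path y by (auto simp: path_in_def nth_Cons split: nat.split)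
    then show False using P by (fastforce simp: longest_path_in_def)
  qed
  then obtain t where t: "t < length P" "y = P ! t" by (auto simp: in_set_conv_nth)
  have "t \<noteq> 0" using irrefl[of y] y(2) hd t by (metis gr0I)
  moreover have "\<not> 2 \<le> t"
    using path_chord_cycle[OF path, of 0 t] no_cycle t sym[OF y(2)] hd by auto
  ultimately have "t = 1" by linarith
  then show ?thesis using t by simp
qed

text \<open>If P has only two vertices, \<^term>\<open>P ! 2\<close> is an unspecified junk vertex; the claim still holds.\<close>

lemma longest_path_pendant_nbr:
  assumes P: "longest_path_in E S P" and len: "Suc 0 < length P"
    and u: "u \<in> S" "E (P ! 1) u" "u \<noteq> P ! 2" and w: "w \<in> S" "E u w"
  shows "w = P ! 1"
proof (cases "u = hd P")
  case True
  then show ?thesis using longest_path_hd_nbr[OF P w(1)] w(2) by simp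
next
  case False
  have path: "path_in E S P" using P by (simp add: longest_path_in_def)
  obtain v P' where P_eq: "P = v # P'" using len by (cases P) auto
  have "u \<notin> set P"
  proof
    assume "u \<in> set P"
    then obtain t where t: "t < length P" "u = P ! t" by (auto simp: in_set_conv_nth)
    have "t \<noteq> 0" using False P_eq t by (cases t) auto
    moreover have "t \<noteq> 1" using irrefl[of "P ! 1"] u(2) t by auto
    moreover have "t \<noteq> 2" using u(3) t by auto
    ultimately have "3 \<le> t" by linarith
    then show False
      using path_chord_cycle[OF path, of 1 t] no_cycle t sym[OF u(2)] by auto
  qed
  have "path_in E S (u # P')"
    unfolding path_in_def
  proof (intro conjI allI impI)
    show "distinct (u # P')" using \<open>u \<notin> set P\<close> path P_eq by (simp add: path_in_def)
    show "set (u # P') \<subseteq> S" using u(1) path P_eq by (simp add: path_in_def)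
    fix t assume t: "Suc t < length (u # P')"
    show "E ((u # P') ! t) ((u # P') ! Suc t)"
    proof (cases t)
      case 0
      then show ?thesis using sym[OF u(2)] P_eq by simp
    next
      case (Suc r)
      then have "E (P ! Suc r) (P ! Suc (Suc r))"
        using path t P_eq unfolding path_in_def by (metis length_Cons Suc_less_eq)
      then show ?thesis using Suc P_eq by simp
    qed
  qed simp
  then have "longest_path_in E S (u # P')"
    using P P_eq by (simp add: longest_path_in_def)
  from longest_path_hd_nbr[OF this w(1)] show ?thesis using w(2) P_eq by simp
qed

lemma longest_path_hd_degree:
  assumes P: "longest_path_in E S P"
  shows "card {u\<in>S. E (hd P) u} \<le> 1"
proof -
  have "card {u\<in>S. E (hd P) u} \<le> card {P ! 1}"
    using longest_path_hd_nbr[OF P] by (intro card_mono) auto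
  then show ?thesis by simp
qed

lemma exists_low_degree_vertex:
  assumes "finite S" "S \<noteq> {}"
  shows "\<exists>v\<in>S. card {u\<in>S. E v u} \<le> 1"
proof -
  obtain P where P: "longest_path_in E S P" using longest_path_in_exists[OF assms] by blast
  then have "hd P \<in> S" by (auto simp: longest_path_in_def path_in_def)
  with longest_path_hd_degree[OF P] show ?thesis by blast
qed

lemma exists_hub:
  assumes "finite S" "S \<noteq> {}" "1 \<le> k"
    and no_low: "\<And>x. x \<in> S \<Longrightarrow> card {u\<in>S. E x u} \<le> k \<Longrightarrow>
                   \<exists>y\<in>S. E x y \<and> k < card {u\<in>S. E y u}"
  shows "\<exists>v\<in>S. \<exists>w. k < card {u\<in>S. E v u} \<and>
           (\<forall>u\<in>S. E v u \<longrightarrow> u \<noteq> w \<longrightarrow> (\<forall>z\<in>S. E u z \<longrightarrow> z = v))"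
proof -
  obtain P where P: "longest_path_in E S P" using longest_path_in_exists[OF assms(1,2)] by blast
  have "hd P \<in> S" using P by (auto simp: longest_path_in_def path_in_def)
  moreover have "card {u\<in>S. E (hd P) u} \<le> k" using longest_path_hd_degree[OF P] assms(3) by simp
  ultimately obtain y where y: "y \<in> S" "E (hd P) y" "k < card {u\<in>S. E y u}"
    using no_low by blast
  then have len: "Suc 0 < length P" and "y = P ! 1" using longest_path_hd_nbr[OF P] by auto
  then show ?thesis using y longest_path_pendant_nbr[OF P len] by blast
qed

lemma exists_detachable:
  assumes "finite S" "S \<noteq> {}" "1 \<le> k"
    and "\<And>x. x \<in> S \<Longrightarrow> card {u\<in>S. E x u} \<le> k \<Longrightarrow>
           \<exists>y\<in>S. E x y \<and> k < card {u\<in>S. E y u}"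
  shows "\<exists>X d. detachable E k S X d"
proof -
  obtain v w where v: "v \<in> S" "k < card {u\<in>S. E v u}"
    and "\<forall>u\<in>S. E v u \<longrightarrow> u \<noteq> w \<longrightarrow> (\<forall>z\<in>S. E u z \<longrightarrow> z = v)"
    using exists_hub[OF assms] by blast
  then show ?thesis
    using hub_detachable[where E = E and w = w, OF assms(1,3) v(1) irrefl[of v] v(2)] by blast
qed

lemma low_vertex_extend_deletion:
  assumes fin: "finite S"
    and x: "card {u\<in>S. E x u} \<le> k" "\<forall>y\<in>S. E x y \<longrightarrow> card {u\<in>S. E y u} \<le> k"
    and D: "max_degree_le E (S - {x} - D) k"
  shows "max_degree_le E (S - D) k"
proof
  fix v assume v: "v \<in> S - D"
  show "card {u\<in>S - D. E v u} \<le> k"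
  proof (cases "v = x \<or> E x v")
    case True
    have "card {u\<in>S - D. E v u} \<le> card {u\<in>S. E v u}" using fin by (intro card_mono) auto
    then show ?thesis using True x v by auto
  next
    case False
    then have "{u\<in>S - D. E v u} = {u\<in>S - {x} - D. E v u}" using sym[of v x] by blast
    then show ?thesis using D v False by simp
  qed
qed

lemma detachable_extend_deletion:
  assumes fin: "finite S" and X: "detachable E k S X d"
    and D: "D \<subseteq> S - X" "card D \<le> card (S - X) div (k + 2)" "max_degree_le E (S - X - D) k"
  shows "card (insert d D) \<le> card S div (k + 2)"
    and "max_degree_le E (S - insert d D) k"
proof -
  have XS: "X \<subseteq> S" and "d \<in> X" and cardX: "k + 2 \<le> card X"
    and closed: "\<And>x y. x \<in> X - {d} \<Longrightarrow> y \<in> S \<Longrightarrow> E x y \<Longrightarrow> y \<in> X"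
    and inner: "max_degree_le E (X - {d}) k"
    using X by (auto simp: detachable_def)
  have "card (S - X) = card S - card X" using XS fin by (simp add: card_Diff_subset finite_subset)
  then have "card D \<le> (card S - (k + 2)) div (k + 2)"
    using D(2) cardX by (metis diff_le_mono2 div_le_mono order_trans)
  moreover have "k + 2 \<le> card S" using cardX card_mono[OF fin XS] by linarith
  ultimately have "card D + 1 \<le> card S div (k + 2)" using le_div_geq[of "k + 2" "card S"] by simp
  moreover have "card (insert d D) \<le> card D + 1"
    using D(1) fin by (simp add: card_insert_if finite_subset)
  ultimately show "card (insert d D) \<le> card S div (k + 2)" by linarith
  show "max_degree_le E (S - insert d D) k"
  proof
    fix v assume v: "v \<in> S - insert d D"
    show "card {u\<in>S - insert d D. E v u} \<le> k"
    proof (cases "v \<in> X")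
      case True
      have "{u\<in>S - insert d D. E v u} \<subseteq> {u\<in>X - {d}. E v u}" using closed True v by blast
      then have "card {u\<in>S - insert d D. E v u} \<le> card {u\<in>X - {d}. E v u}"
        using finite_subset[OF XS fin] by (intro card_mono) auto
      moreover have "card {u\<in>X - {d}. E v u} \<le> k" using inner True v by blast
      ultimately show ?thesis by linarith
    next
      case False
      have "u \<notin> X" if "u \<in> S - insert d D" "E v u" for u
        using closed[of u v] sym[OF that(2)] that(1) v False by blast
      then have "{u\<in>S - insert d D. E v u} \<subseteq> {u\<in>S - X - D. E v u}" by blast
      then have "card {u\<in>S - insert d D. E v u} \<le> card {u\<in>S - X - D. E v u}"
        using fin by (intro card_mono) auto
      moreover have "card {u\<in>S - X - D. E v u} \<le> k" using D(3) False v by blast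
      ultimately show ?thesis by linarith
    qed
  qed
qed

theorem bounded_degree_deletion:
  assumes "1 \<le> k" "finite S"
  shows "\<exists>D\<subseteq>S. card D \<le> card S div (k + 2) \<and> max_degree_le E (S - D) k"
  using assms(2)
proof (induction "card S" arbitrary: S rule: less_induct)
  case less
  show ?case
  proof (cases "\<exists>x\<in>S. card {u\<in>S. E x u} \<le> k \<and> (\<forall>y\<in>S. E x y \<longrightarrow> card {u\<in>S. E y u} \<le> k)")
    case True
    then obtain x where x: "x \<in> S" "card {u\<in>S. E x u} \<le> k"
      "\<forall>y\<in>S. E x y \<longrightarrow> card {u\<in>S. E y u} \<le> k" by blast
    have "card (S - {x}) < card S" using less.prems x(1) by (rule card_Diff1_less)
    from less.hyps[OF this finite_Diff[OF less.prems]]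
    obtain D where D: "D \<subseteq> S - {x}" "card D \<le> card (S - {x}) div (k + 2)"
      "max_degree_le E (S - {x} - D) k" by blast
    have "card D \<le> card S div (k + 2)"
      using le_trans[OF D(2) div_le_mono[OF card_Diff1_le]] .
    then show ?thesis using low_vertex_extend_deletion[OF less.prems x(2,3) D(3)] D(1) by blast
  next
    case no_low: False
    show ?thesis
    proof (cases "S = {}")
      case False
      have "\<exists>y\<in>S. E x y \<and> k < card {u\<in>S. E y u}"
        if "x \<in> S" "card {u\<in>S. E x u} \<le> k" for x
        using no_low that not_le by blast
      then obtain X d where X: "detachable E k S X d"
        using exists_detachable[OF less.prems False assms(1)] by blast
      then have "X \<subseteq> S" "d \<in> X" by (auto simp: detachable_def)
      then have "card (S - X) < card S" using less.prems by (intro psubset_card_mono) auto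
      from less.hyps[OF this finite_Diff[OF less.prems]]
      obtain D where D: "D \<subseteq> S - X" "card D \<le> card (S - X) div (k + 2)"
          "max_degree_le E (S - X - D) k" by blast
      have "insert d D \<subseteq> S" using D(1) \<open>X \<subseteq> S\<close> \<open>d \<in> X\<close> by blast
      then show ?thesis using detachable_extend_deletion[OF less.prems X D] by blast
    qed simp
  qed
qed

end

lemma forest_sparse_set:
  assumes "forest n E" "1 \<le> k" "j + n div (k + 2) \<le> n"
  shows "\<exists>S. sparse_set n E k j S"
proof -
  interpret acyclic_graph E using assms(1) by (rule forest_acyclic_graph)
  obtain D where D: "D \<subseteq> {0..<n}" "card D \<le> n div (k + 2)" "max_degree_le E ({0..<n} - D) k"
    using bounded_degree_deletion[OF assms(2), of "{0..<n}"] by auto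
  have "card ({0..<n} - D) = n - card D"
    using card_Diff_subset[OF finite_subset[OF D(1)] D(1)] by simp
  then have "j \<le> card ({0..<n} - D)" using D(2) assms(3) by linarith
  then obtain T where T: "T \<subseteq> {0..<n} - D" "card T = j" by (meson obtain_subset_with_card_n)
  have "max_degree_le E T k" using max_degree_le_subset[OF _ T(1) D(3)] by blast
  then show ?thesis using T unfolding sparse_set_def by blast
qed

lemma forest_no_dense_set:
  assumes "forest n E" "k + 3 \<le> i"
  shows "\<not> dense_set n E k i S"
proof
  assume "dense_set n E k i S"
  then have S: "S \<subseteq> {0..<n}" "card S = i"
    and dense: "\<forall>v\<in>S. card {u\<in>S. u \<noteq> v \<and> \<not> E v u} \<le> k"
    unfolding dense_set_def by auto
  interpret acyclic_graph E using assms(1) by (rule forest_acyclic_graph)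
  have finS: "finite S" using S(1) finite_subset by blast
  moreover have "S \<noteq> {}" using S(2) assms(2) by auto
  ultimately obtain v where v: "v \<in> S" "card {u\<in>S. E v u} \<le> 1"
    using exists_low_degree_vertex by blast
  have "card (S - {v}) \<le> card ({u\<in>S. E v u} \<union> {u\<in>S. u \<noteq> v \<and> \<not> E v u})"
    using finS by (intro card_mono) auto
  also have "\<dots> \<le> card {u\<in>S. E v u} + card {u\<in>S. u \<noteq> v \<and> \<not> E v u}"
    by (rule card_Un_le)
  also have "\<dots> \<le> 1 + k" using v dense by (intro add_mono) auto
  finally show False using v(1) finS S(2) assms(2) by simp
qed

lemma no_cycle_if_no_path3:
  assumes no_path3: "\<And>a b c y. E a b \<Longrightarrow> E b c \<Longrightarrow> E c y \<Longrightarrow> a \<noteq> c \<Longrightarrow> y \<noteq> b \<Longrightarrow> False"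
  shows "\<not> is_cycle E cs"
proof
  assume "is_cycle E cs"
  then have len: "3 \<le> length cs" and dist: "distinct cs"
    and adj: "\<And>t. Suc t < length cs \<Longrightarrow> E (cs ! t) (cs ! Suc t)"
    and close: "E (last cs) (hd cs)"
    unfolding is_cycle_def by auto
  have ne: "cs \<noteq> []" using len by auto
  have distinct_nth: "cs ! s \<noteq> cs ! t" if "s < length cs" "t < length cs" "s \<noteq> t" for s t
    using nth_eq_iff_index_eq[OF dist that(1,2)] that(3) by simp
  have e01: "E (cs ! 0) (cs ! 1)" and e12: "E (cs ! 1) (cs ! 2)"
    using adj[of 0] adj[of 1] len by (auto simp: numeral_2_eq_2)
  have "cs ! 0 \<noteq> cs ! 2" using distinct_nth[of 0 2] len ne by simp
  show False
  proof (cases "length cs = 3")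
    case True
    then have "E (cs ! 2) (cs ! 0)" using close ne by (simp add: last_conv_nth hd_conv_nth)
    moreover have "cs ! 0 \<noteq> cs ! 1" using distinct_nth[of 0 1] len ne by simp
    ultimately show False using no_path3[OF e01 e12] \<open>cs ! 0 \<noteq> cs ! 2\<close> by blast
  next
    case False
    then have "E (cs ! 2) (cs ! 3)" using adj[of 2] len by (simp add: numeral_3_eq_3)
    moreover have "cs ! 3 \<noteq> cs ! 1" using distinct_nth[of 3 1] len False by simp
    ultimately show False using no_path3[OF e01 e12] \<open>cs ! 0 \<noteq> cs ! 2\<close> by blast
  qed
qed

text \<open>Vertex u belongs to block u div (k + 2). The first q blocks (cut off at n) are stars centred
  at the multiples of k + 2; all other vertices are isolated.\<close>

definition star_graph :: "nat \<Rightarrow> nat \<Rightarrow> nat \<Rightarrow> nat \<Rightarrow> nat \<Rightarrow> bool" where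
  "star_graph k q n u v \<longleftrightarrow> u < n \<and> v < n \<and> u < q * (k + 2) \<and> v < q * (k + 2) \<and>
     u div (k + 2) = v div (k + 2) \<and> u \<noteq> v \<and> (u mod (k + 2) = 0 \<or> v mod (k + 2) = 0)"

lemma star_graph_no_path3:
  assumes "star_graph k q n a b" "star_graph k q n b c" "star_graph k q n c y" "a \<noteq> c" "y \<noteq> b"
  shows False
  \<comment> \<open>every edge joins the unique centre of a block to another vertex of that block\<close>
  using assms unfolding star_graph_def by (metis div_mult_mod_eq)

lemma star_graph_forest: "forest n (star_graph k q n)"
  unfolding forest_def
proof
  show "simple_graph n (star_graph k q n)"
    unfolding simple_graph_def star_graph_def by auto
  show "\<nexists>cs. is_cycle (star_graph k q n) cs"
    using no_cycle_if_no_path3 star_graph_no_path3 by blast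
qed

lemma star_graph_sparse_card:
  assumes S: "S \<subseteq> {0..<n}" and sparse: "max_degree_le (star_graph k q n) S k"
  shows "card S \<le> q * (k + 1) + (n - q * (k + 2))"
proof -
  let ?m = "k + 2"
  define B where "B b = {u\<in>S. u < q * ?m \<and> u div ?m = b}" for b
  have finS: "finite S" using S finite_subset by blast
  have in_block: "b * ?m \<le> u \<and> u < b * ?m + ?m" if "u div ?m = b" for u b
  proof -
    have "u div ?m * ?m + u mod ?m = u" by (rule div_mult_mod_eq)
    moreover have "u mod ?m < ?m" by simp
    ultimately show ?thesis unfolding that by linarith
  qed
  have block_card: "card (B b) \<le> k + 1" for b
  proof -
    define c where "c = b * ?m"
    have c: "c div ?m = b" "c mod ?m = 0"
      unfolding c_def by (rule div_mult_self_is_m, simp, rule mod_mult_self2_is_0)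
    have block: "c \<le> u" "u < c + ?m" if "u \<in> B b" for u
      using in_block[of u b] that unfolding B_def c_def by auto
    show ?thesis
    proof (cases "c \<in> B b")
      case True
      have "B b \<subseteq> insert c {u\<in>S. star_graph k q n c u}"
        using True S c by (auto simp: B_def star_graph_def)
      then have "card (B b) \<le> card (insert c {u\<in>S. star_graph k q n c u})"
        using finS by (intro card_mono) auto
      also have "\<dots> \<le> Suc (card {u\<in>S. star_graph k q n c u})"
        by (rule card_insert_le_m1) simp_all
      also have "\<dots> \<le> k + 1" using sparse True by (simp add: B_def)
      finally show ?thesis .
    next
      case False
      have "B b \<subseteq> {c + 1..<c + ?m}"
      proof
        fix u assume "u \<in> B b"
        then have "u \<noteq> c" "c \<le> u" "u < c + ?m" using False block by auto
        then show "u \<in> {c + 1..<c + ?m}" by simp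
      qed
      then have "card (B b) \<le> card {c + 1..<c + ?m}" by (intro card_mono) auto
      then show ?thesis by simp
    qed
  qed
  have "S \<subseteq> (\<Union>b<q. B b) \<union> {q * ?m..<n}"
    using S by (auto simp: B_def less_mult_imp_div_less)
  then have "card S \<le> card ((\<Union>b<q. B b) \<union> {q * ?m..<n})"
    using finS by (intro card_mono) (auto simp: B_def)
  also have "\<dots> \<le> card (\<Union>b<q. B b) + card {q * ?m..<n}" by (rule card_Un_le)
  also have "card (\<Union>b<q. B b) \<le> (\<Sum>b<q. card (B b))" by (rule card_UN_le) simp
  also have "\<dots> \<le> q * (k + 1)"
    using sum_bounded_above[of "{..<q}" "\<lambda>b. card (B b)" "k + 1"] block_card by simp
  finally show ?thesis by simp
qed

lemma star_graph_no_sparse_set: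
  assumes "q * (k + 1) + (n - q * (k + 2)) < j"
  shows "\<not> sparse_set n (star_graph k q n) k j S"
proof
  assume "sparse_set n (star_graph k q n) k j S"
  then have "card S \<le> q * (k + 1) + (n - q * (k + 2))" "card S = j"
    unfolding sparse_set_def using star_graph_sparse_card by auto
  then show False using assms by simp
qed

theorem theorem3p2:
  fixes k i j :: nat
  assumes "k \<ge> 1" and "i \<ge> k + 3" and "j \<ge> k + 2"
  shows "forest_defective_ramsey k i j = j + (j - 1) div (k + 1)"
proof -
  define q where "q = (j - 1) div (k + 1)"
  define N where "N = j + q"
  have "q * (k + 1) + (j - 1) mod (k + 1) = j - 1"
    unfolding q_def by (rule div_mult_mod_eq)
  moreover have "(j - 1) mod (k + 1) < k + 1" by simp
  ultimately have j_lower: "q * (k + 1) < j" and j_upper: "j \<le> q * (k + 1) + (k + 1)"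
    using assms(3) by linarith+
  have "N div (k + 2) = q"
    using j_lower j_upper unfolding N_def by (intro div_nat_eqI) (simp_all add: algebra_simps)
  let ?good = "\<lambda>n. \<forall>E. forest n E \<longrightarrow> (\<exists>S. dense_set n E k i S) \<or> (\<exists>S. sparse_set n E k j S)"
  have good: "?good N"
    using forest_sparse_set[OF _ assms(1)] \<open>N div (k + 2) = q\<close> unfolding N_def by simp
  have not_good: "\<not> ?good m" if "m < N" for m
  proof -
    have "q * (k + 1) + (m - q * (k + 2)) < j"
      using that j_lower unfolding N_def by (simp add: algebra_simps)
    then have "\<not> sparse_set m (star_graph k q m) k j S" for S
      by (rule star_graph_no_sparse_set)
    moreover have "\<not> dense_set m (star_graph k q m) k i S" for S
      using forest_no_dense_set[OF star_graph_forest assms(2)] .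
    ultimately show ?thesis using star_graph_forest[of m k q] by blast
  qed
  have "(LEAST n. ?good n) = N"
    using good not_good by (intro Least_equality) (meson not_le)+
  then show ?thesis unfolding forest_defective_ramsey_def N_def q_def .
qed

end
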